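(* Let $(X,d)$ be a complete separable metric space without isolated points and let $f\colon X\to X$ be a continuous map. Then the following are equivalent: (1) for each $k\geq 2$, $D_k(f)$ is dense in $X^k$; (2) there exist a sequence $\{q_n\}$ in $\mathbb{N}$ and a dense $\sigma$-Cantor subset $S$ of $X$ such that for any $x,y\in S$ with $x\neq y$, $\lim_{n\to\infty} d(f^{q_n}(x),f^{q_n}(y))=\infty$.
   Context: For $k\geq 2$, $D_k(f)=\{(x_1,\dots,x_k)\in X^k: \limsup_{n\to\infty}\min_{1\leq i<j\leq k} d(f^n(x_i),f^n(x_j))=\infty\}$. A $\sigma$-Cantor set is a countable union of sets each homeomorphic to the Cantor ternary set. *)

theory Defs
  imports "HOL-Analysis.Analysis"
begin

text \<open>Tuples in X^k are represented as functions on the index set {..<k},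
  i.e. elements of the extensional function space PiE {..<k} (\<lambda>_. UNIV).\<close>

definition D :: "nat \<Rightarrow> ('a::metric_space \<Rightarrow> 'a) \<Rightarrow> (nat \<Rightarrow> 'a) set" where
  "D k f = {x \<in> PiE {..<k} (\<lambda>_. UNIV).
     limsup (\<lambda>n. ereal (Min {dist ((f ^^ n) (x i)) ((f ^^ n) (x j)) | i j. i < j \<and> j < k}))
       = \<infinity>}"

definition cantor_ternary_set :: "real set" where
  "cantor_ternary_set = {x. \<exists>a::nat \<Rightarrow> nat. (\<forall>n. a n \<in> {0, 2}) \<and>
                              x = (\<Sum>n. real (a n) / 3 ^ (Suc n))}"

definition sigma_Cantor :: "'a::topological_space set \<Rightarrow> bool" where
  "sigma_Cantor S \<longleftrightarrow> (\<exists>\<F>. countable \<F> \<and> S = \<Union>\<F> \<and>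
                        (\<forall>C\<in>\<F>. C homeomorphic cantor_ternary_set))"

end

theory Submission
  imports Defs
begin

text \<open>
  (2) \<Longrightarrow> (1): since \<open>X\<close> has no isolated points, every basic open box of \<open>X\<^sup>k\<close> contains a
  tuple of pairwise distinct points of the dense set \<open>S\<close>, and along \<open>q\<^sub>n\<close> all pairwise
  distances of such a tuple tend to infinity, so the tuple lies in \<open>D\<^sub>k\<close>.

  (1) \<Longrightarrow> (2): fix a countable base \<open>U\<^sub>0, U\<^sub>1, \<dots>\<close> of nonempty open sets and build a
  Cantor scheme. At level \<open>n\<close> there is one closed ball of radius at most \<open>1/(n+1)\<close> for every
  node of the first \<open>n + 1\<close> binary trees (tree \<open>m\<close> starts at level \<open>m\<close> with its root inside
  \<open>U\<^sub>m\<close>), each ball lies inside the ball of its parent, and one iterate \<open>f\<^bsup>q\<^sub>n\<^esup>\<close> maps any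
  two balls of level \<open>n\<close> at distance at least \<open>n\<close> from each other. Density of \<open>D\<^sub>k\<close>, for
  \<open>k\<close> the number of nodes, provides the centres and the time \<open>q\<^sub>n\<close>; continuity of
  \<open>f\<^bsup>q\<^sub>n\<^esup>\<close> provides the radii. By completeness each branch of tree \<open>m\<close> shrinks to a
  point, which gives a continuous injection of \<open>{0,1}\<^sup>\<nat>\<close>, i.e. a Cantor set inside \<open>U\<^sub>m\<close>.
  Their union is dense, and two distinct points of it eventually lie in different balls of
  the same level, so their \<open>q\<^sub>n\<close>-orbits separate.
\<close>

section \<open>The Cantor space and the ternary Cantor set\<close>

lemma compact_Cantor_space: "compact (UNIV :: (nat \<Rightarrow> bool) set)"
proof -
  have "compact_space (euclidean :: bool topology)"
    by (simp add: compact_space_def finite_imp_compact)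
  then have "compact_space (product_topology (\<lambda>_::nat. euclidean :: bool topology) UNIV)"
    by (simp add: compact_space_product_topology)
  then show ?thesis
    by (simp add: euclidean_product_topology compact_space_def)
qed

definition cantor_ternary_map :: "(nat \<Rightarrow> bool) \<Rightarrow> real" where
  "cantor_ternary_map b = (\<Sum>n. (if b n then 2 else 0) / 3 ^ Suc n)"

lemma ternary_twos_sums: "(\<lambda>n. 2 / 3 ^ Suc n :: real) sums 1"
proof -
  have "(\<lambda>n. 2/3 * (1/3) ^ n :: real) sums (2/3 * (1 / (1 - 1/3)))"
    by (intro sums_mult geometric_sums) auto
  then show ?thesis
    by (simp add: field_simps power_divide)
qed

lemma ternary_digit_bound: "norm ((if d then 2 else 0) / 3 ^ Suc n :: real) \<le> 2 / 3 ^ Suc n"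
  by simp

lemma summable_cantor_ternary_map:
  "summable (\<lambda>n. (if b n then 2 else 0) / 3 ^ Suc n :: real)"
  by (rule summable_comparison_test[OF _ sums_summable[OF ternary_twos_sums]])
    (use ternary_digit_bound in blast)

lemma cantor_ternary_map_bounds: "0 \<le> cantor_ternary_map b" "cantor_ternary_map b \<le> 1"
proof -
  show "0 \<le> cantor_ternary_map b"
    unfolding cantor_ternary_map_def
    by (intro suminf_nonneg summable_cantor_ternary_map) simp
  have "cantor_ternary_map b \<le> (\<Sum>n. 2 / 3 ^ Suc n)"
    unfolding cantor_ternary_map_def
    by (intro suminf_le summable_cantor_ternary_map sums_summable[OF ternary_twos_sums]) simp
  then show "cantor_ternary_map b \<le> 1"
    using ternary_twos_sums sums_unique by metis
qed

lemma cantor_ternary_map_shift: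
  "cantor_ternary_map b = ((if b 0 then 2 else 0) + cantor_ternary_map (b \<circ> Suc)) / 3"
proof -
  have "(\<Sum>n. (if b (Suc n) then 2 else 0) / 3 ^ Suc (Suc n)) = cantor_ternary_map (b \<circ> Suc) / 3"
    unfolding cantor_ternary_map_def
    using suminf_divide[OF summable_cantor_ternary_map[of "b \<circ> Suc"], of 3] by simp
  then show ?thesis
    using suminf_split_head[OF summable_cantor_ternary_map[of b]]
    by (simp add: cantor_ternary_map_def field_simps)
qed

lemma cantor_ternary_map_eqD:
  assumes "cantor_ternary_map b = cantor_ternary_map b'"
  shows "b 0 = b' 0" "cantor_ternary_map (b \<circ> Suc) = cantor_ternary_map (b' \<circ> Suc)"
proof -
  show "b 0 = b' 0"
    using assms cantor_ternary_map_shift[of b] cantor_ternary_map_shift[of b']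
      cantor_ternary_map_bounds[of "b \<circ> Suc"] cantor_ternary_map_bounds[of "b' \<circ> Suc"]
    by (auto split: if_splits)
  then show "cantor_ternary_map (b \<circ> Suc) = cantor_ternary_map (b' \<circ> Suc)"
    using assms cantor_ternary_map_shift[of b] cantor_ternary_map_shift[of b'] by simp
qed

lemma inj_cantor_ternary_map: "inj cantor_ternary_map"
proof (rule injI, rule ext)
  show "b n = b' n" if "cantor_ternary_map b = cantor_ternary_map b'" for n b b'
    using that
  proof (induction n arbitrary: b b')
    case 0
    then show ?case by (rule cantor_ternary_map_eqD)
  next
    case (Suc n)
    then show ?case
      using Suc.IH[OF cantor_ternary_map_eqD(2)] by simp
  qed
qed

lemma continuous_on_cantor_ternary_map: "continuous_on UNIV cantor_ternary_map"
proof (rule uniform_limit_theorem)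
  show "uniform_limit UNIV (\<lambda>n b. \<Sum>i<n. (if b i then 2 else 0) / 3 ^ Suc i) cantor_ternary_map sequentially"
    unfolding cantor_ternary_map_def[abs_def]
    by (rule Weierstrass_m_test[OF ternary_digit_bound sums_summable[OF ternary_twos_sums]])
  have "continuous_on UNIV (\<lambda>d::bool. (if d then 2 else 0) / 3 ^ Suc i :: real)" for i
    by (simp add: continuous_on_discrete)
  then have "continuous_on UNIV (\<lambda>b::nat \<Rightarrow> bool. (if b i then 2 else 0) / 3 ^ Suc i :: real)" for i
    by (rule continuous_on_compose2[OF _ continuous_on_product_coordinates]) auto
  then show "\<forall>\<^sub>F n in sequentially. continuous_on UNIV (\<lambda>b. \<Sum>i<n. (if b i then 2 else 0) / 3 ^ Suc i :: real)"
    by (intro always_eventually allI continuous_on_sum)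
qed simp

lemma range_cantor_ternary_map: "range cantor_ternary_map = cantor_ternary_set"
proof (intro equalityI subsetI)
  fix x assume "x \<in> range cantor_ternary_map"
  then obtain b where "x = cantor_ternary_map b" by blast
  then show "x \<in> cantor_ternary_set"
    unfolding cantor_ternary_set_def cantor_ternary_map_def
    by (intro CollectI exI[of _ "\<lambda>n. if b n then 2 else 0"]) (auto intro!: suminf_cong)
next
  fix x assume "x \<in> cantor_ternary_set"
  then obtain a :: "nat \<Rightarrow> nat" where a: "\<forall>n. a n \<in> {0, 2}" "x = (\<Sum>n. real (a n) / 3 ^ Suc n)"
    unfolding cantor_ternary_set_def by blast
  moreover have "real (a n) = (if a n = 2 then 2 else 0)" for n
    using a(1) by (cases "a n = 2") auto
  ultimately have "x = cantor_ternary_map (\<lambda>n. a n = 2)"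
    unfolding cantor_ternary_map_def by simp
  then show "x \<in> range cantor_ternary_map" by blast
qed

lemma range_homeomorphic_cantor_ternary_set:
  fixes g :: "(nat \<Rightarrow> bool) \<Rightarrow> 'a::t2_space"
  assumes "continuous_on UNIV g" "inj g"
  shows "range g homeomorphic cantor_ternary_set"
proof -
  have "(UNIV :: (nat \<Rightarrow> bool) set) homeomorphic range g"
    using homeomorphism_compact[OF compact_Cantor_space assms(1) refl] assms(2)
    unfolding homeomorphic_def by blast
  moreover have "(UNIV :: (nat \<Rightarrow> bool) set) homeomorphic cantor_ternary_set"
    using homeomorphism_compact[OF compact_Cantor_space continuous_on_cantor_ternary_map refl]
      inj_cantor_ternary_map range_cantor_ternary_map
    by (auto simp: homeomorphic_def)
  ultimately show ?thesis
    by (metis homeomorphic_sym homeomorphic_trans)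
qed

section \<open>Pairwise distances along orbits\<close>

lemma limsup_ereal_eq_PInfty_iff:
  "limsup (\<lambda>n. ereal (u n)) = \<infinity> \<longleftrightarrow> (\<forall>M. \<exists>\<^sub>F n in sequentially. M < u n)"
proof
  assume limsup: "limsup (\<lambda>n. ereal (u n)) = \<infinity>"
  show "\<forall>M. \<exists>\<^sub>F n in sequentially. M < u n"
  proof (rule allI, rule ccontr)
    fix M assume "\<not> (\<exists>\<^sub>F n in sequentially. M < u n)"
    then have "\<forall>\<^sub>F n in sequentially. ereal (u n) \<le> ereal M"
      by (simp add: not_frequently not_less)
    then have "limsup (\<lambda>n. ereal (u n)) \<le> ereal M"
      by (rule Limsup_bounded)
    with limsup show False by simp
  qed
next
  assume frequently_large: "\<forall>M. \<exists>\<^sub>F n in sequentially. M < u n"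
  show "limsup (\<lambda>n. ereal (u n)) = \<infinity>"
  proof (rule ccontr)
    assume "limsup (\<lambda>n. ereal (u n)) \<noteq> \<infinity>"
    then obtain M :: nat where "limsup (\<lambda>n. ereal (u n)) < ereal M"
      using less_PInf_Ex_of_nat by blast
    then have "\<forall>\<^sub>F n in sequentially. ereal (u n) < ereal M"
      by (rule Limsup_lessD)
    then have "\<forall>\<^sub>F n in sequentially. \<not> M < u n"
      by (rule eventually_mono) simp
    then show False
      using frequently_large by (simp add: frequently_def)
  qed
qed

lemma finite_pair_image: "finite {g i j | i j. i < j \<and> j < (k::nat)}"
  by (rule finite_subset[of _ "(\<lambda>(i, j). g i j) ` ({..<k} \<times> {..<k})"]) auto

lemma less_Min_pairs_iff:
  fixes g :: "nat \<Rightarrow> nat \<Rightarrow> 'a::linorder"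
  assumes "k \<ge> 2"
  shows "M < Min {g i j | i j. i < j \<and> j < k} \<longleftrightarrow> (\<forall>i j. i < j \<longrightarrow> j < k \<longrightarrow> M < g i j)"
proof -
  have "g 0 1 \<in> {g i j | i j. i < j \<and> j < k}"
    using assms by force
  then show ?thesis
    by (subst Min_gr_iff[OF finite_pair_image]) blast+
qed

lemma all_pairs_less_iff_all_distinct:
  fixes d :: "nat \<Rightarrow> nat \<Rightarrow> 'b"
  assumes "\<And>i j. d i j = d j i"
  shows "(\<forall>i j. i < j \<longrightarrow> j < k \<longrightarrow> P (d i j)) \<longleftrightarrow> (\<forall>i<k. \<forall>j<k. i \<noteq> j \<longrightarrow> P (d i j))"
proof (intro iffI allI impI)
  fix i j assume ordered: "\<forall>i j. i < j \<longrightarrow> j < k \<longrightarrow> P (d i j)" and "i < k" "j < k" "i \<noteq> j"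
  show "P (d i j)"
  proof (cases "i < j")
    case False
    then have "P (d j i)" using ordered \<open>i < k\<close> \<open>i \<noteq> j\<close> by simp
    then show ?thesis by (simp only: assms[of j i])
  qed (use ordered \<open>j < k\<close> in simp)
qed auto

definition pairwise_min_dist :: "('a::metric_space \<Rightarrow> 'a) \<Rightarrow> nat \<Rightarrow> (nat \<Rightarrow> 'a) \<Rightarrow> nat \<Rightarrow> real" where
  "pairwise_min_dist f k x n = Min {dist ((f ^^ n) (x i)) ((f ^^ n) (x j)) | i j. i < j \<and> j < k}"

definition D_dense :: "('a::metric_space \<Rightarrow> 'a) \<Rightarrow> nat \<Rightarrow> bool" where
  "D_dense f k \<longleftrightarrow> product_topology (\<lambda>_. euclidean) {..<k} closure_of D k f
                       = topspace (product_topology (\<lambda>_. euclidean) {..<k})"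

lemma mem_D_iff:
  "x \<in> D k f \<longleftrightarrow> x \<in> (\<Pi>\<^sub>E i\<in>{..<k}. UNIV) \<and> (\<forall>M. \<exists>\<^sub>F n in sequentially. M < pairwise_min_dist f k x n)"
  unfolding D_def pairwise_min_dist_def limsup_ereal_eq_PInfty_iff by simp

lemma less_pairwise_min_dist_iff:
  assumes "k \<ge> 2"
  shows "M < pairwise_min_dist f k x n \<longleftrightarrow>
    (\<forall>i<k. \<forall>j<k. i \<noteq> j \<longrightarrow> M < dist ((f ^^ n) (x i)) ((f ^^ n) (x j)))"
  unfolding pairwise_min_dist_def less_Min_pairs_iff[OF assms]
  using all_pairs_less_iff_all_distinct[where d = "\<lambda>i j. dist ((f ^^ n) (x i)) ((f ^^ n) (x j))"]
  by (simp add: dist_commute)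

lemma frequently_less_if_filterlim_comp:
  fixes u :: "nat \<Rightarrow> real"
  assumes "filterlim (\<lambda>n. u (q n)) at_top sequentially"
  shows "\<exists>\<^sub>F n in sequentially. M < u n"
proof (rule ccontr)
  assume "\<not> (\<exists>\<^sub>F n in sequentially. M < u n)"
  then obtain N where N: "\<And>n. N \<le> n \<Longrightarrow> u n \<le> M"
    unfolding not_frequently eventually_sequentially by (meson not_less)
  define B where "B = max M (Max (u ` {..<N}))"
  have "u n \<le> B" for n
  proof (cases "N \<le> n")
    case False
    then have "u n \<le> Max (u ` {..<N})"
      by (simp add: not_le)
    then show ?thesis
      by (simp add: B_def)
  qed (use N[of n] in \<open>simp add: B_def\<close>)
  moreover have "\<forall>\<^sub>F n in sequentially. B < u (q n)"
    using assms unfolding filterlim_at_top_dense by blast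
  then obtain n where "B < u (q n)"
    using eventually_happens'[OF sequentially_bot] by blast
  ultimately show False
    by (meson not_less)
qed

section \<open>Dense sets with diverging orbits make every \<open>D\<^sub>k\<close> dense\<close>

lemma infinite_Int_open_if_dense:
  fixes S :: "'a::{metric_space, perfect_space} set"
  assumes "closure S = UNIV" "open V" "x \<in> V"
  shows "infinite (S \<inter> V)"
proof -
  obtain e where e: "0 < e" "ball x e \<subseteq> V"
    using assms(2,3) open_contains_ball by blast
  have "x islimpt S"
    using limpt_of_closure[of x S] assms(1) by simp
  then have "infinite (S \<inter> ball x e)"
    using e(1) islimpt_eq_infinite_ball by blast
  then show ?thesis
    using e(2) by (meson Int_mono finite_subset order_refl)
qed

lemma ex_inj_on_choice:
  fixes A :: "nat \<Rightarrow> 'a set"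
  assumes "\<And>i. i < k \<Longrightarrow> infinite (A i)"
  shows "\<exists>y. (\<forall>i<k. y i \<in> A i) \<and> inj_on y {..<k}"
  using assms
proof (induction k)
  case (Suc k)
  then obtain y where y: "\<forall>i<k. y i \<in> A i" "inj_on y {..<k}"
    by auto
  have "infinite (A k - y ` {..<k})"
    using Suc.prems[of k] by (simp add: Diff_infinite_finite)
  then obtain z where z: "z \<in> A k" "z \<notin> y ` {..<k}"
    by (metis Diff_iff finite.emptyI ex_in_conv)
  have "\<forall>i<Suc k. (y(k := z)) i \<in> A i"
    using y(1) z(1) by (simp add: less_Suc_eq)
  moreover have "inj_on (y(k := z)) {..<Suc k}"
    using y(2) z(2) by (auto simp: lessThan_Suc inj_on_def)
  ultimately show ?case
    by blast
qed simp

lemma mem_D_if_pairwise_diverging: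
  assumes "k \<ge> 2" "x \<in> (\<Pi>\<^sub>E i\<in>{..<k}. UNIV)"
    and diverge: "\<And>i j. i < k \<Longrightarrow> j < k \<Longrightarrow> i \<noteq> j \<Longrightarrow>
           filterlim (\<lambda>n. dist ((f ^^ q n) (x i)) ((f ^^ q n) (x j))) at_top sequentially"
  shows "x \<in> D k f"
proof -
  have "\<forall>\<^sub>F n in sequentially. M < pairwise_min_dist f k x (q n)" for M
  proof -
    have "\<forall>i\<in>{..<k}. \<forall>j\<in>{..<k}. \<forall>\<^sub>F n in sequentially.
        i \<noteq> j \<longrightarrow> M < dist ((f ^^ q n) (x i)) ((f ^^ q n) (x j))"
    proof (intro ballI)
      fix i j assume "i \<in> {..<k}" "j \<in> {..<k}"
      show "\<forall>\<^sub>F n in sequentially. i \<noteq> j \<longrightarrow> M < dist ((f ^^ q n) (x i)) ((f ^^ q n) (x j))"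
      proof (cases "i = j")
        case False
        with diverge \<open>i \<in> {..<k}\<close> \<open>j \<in> {..<k}\<close>
        have "\<forall>\<^sub>F n in sequentially. M < dist ((f ^^ q n) (x i)) ((f ^^ q n) (x j))"
          unfolding filterlim_at_top_dense by simp
        then show ?thesis
          by (rule eventually_mono) simp
      qed simp
    qed
    then have "\<forall>\<^sub>F n in sequentially. \<forall>i\<in>{..<k}. \<forall>j\<in>{..<k}.
        i \<noteq> j \<longrightarrow> M < dist ((f ^^ q n) (x i)) ((f ^^ q n) (x j))"
      by (simp add: eventually_ball_finite_distrib)
    then show ?thesis
      by (rule eventually_mono) (simp add: less_pairwise_min_dist_iff[OF \<open>k \<ge> 2\<close>])
  qed
  then have "filterlim (\<lambda>n. pairwise_min_dist f k x (q n)) at_top sequentially"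
    unfolding filterlim_at_top_dense by blast
  then show ?thesis
    using assms(2) frequently_less_if_filterlim_comp by (simp add: mem_D_iff)
qed

lemma D_dense_if_dense_diverging_set:
  fixes f :: "'a::{metric_space, perfect_space} \<Rightarrow> 'a"
  assumes dense: "closure S = UNIV"
    and diverge: "\<And>x y. x \<in> S \<Longrightarrow> y \<in> S \<Longrightarrow> x \<noteq> y \<Longrightarrow>
           filterlim (\<lambda>n. dist ((f ^^ q n) x) ((f ^^ q n) y)) at_top sequentially"
    and "k \<ge> 2"
  shows "D_dense f k"
  unfolding D_dense_def dense_intersects_open
proof (intro allI impI)
  fix T :: "(nat \<Rightarrow> 'a) set"
  assume T: "openin (product_topology (\<lambda>_. euclidean) {..<k}) T \<and> T \<noteq> {}"
  then obtain z where "z \<in> T"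
    by blast
  then have "\<exists>X. z \<in> (\<Pi>\<^sub>E i\<in>{..<k}. X i) \<and> (\<forall>i. openin euclidean (X i)) \<and>
      finite {i. X i \<noteq> topspace euclidean} \<and> (\<Pi>\<^sub>E i\<in>{..<k}. X i) \<subseteq> T"
    by (rule product_topology_open_contains_basis[OF conjunct1[OF T]])
  then obtain X where X: "z \<in> (\<Pi>\<^sub>E i\<in>{..<k}. X i)" "\<forall>i. openin euclidean (X i)"
    "finite {i. X i \<noteq> topspace euclidean}" "(\<Pi>\<^sub>E i\<in>{..<k}. X i) \<subseteq> T"
    by (elim exE conjE)
  have "infinite (S \<inter> X i)" if "i < k" for i
    using infinite_Int_open_if_dense[OF dense] X(1,2) that by (auto simp: PiE_iff)
  then obtain y where y: "\<forall>i<k. y i \<in> S \<inter> X i" "inj_on y {..<k}"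
    using ex_inj_on_choice[of k "\<lambda>i. S \<inter> X i"] by blast
  define x where "x = restrict y {..<k}"
  have "x \<in> (\<Pi>\<^sub>E i\<in>{..<k}. X i)"
    using y(1) by (simp add: x_def)
  with X(4) have "x \<in> T"
    by blast
  have x_S: "x i \<in> S" if "i < k" for i
    using y(1) that by (simp add: x_def)
  have x_inj: "x i \<noteq> x j" if "i < k" "j < k" "i \<noteq> j" for i j
    using y(2) that by (simp add: x_def inj_on_eq_iff)
  have "x \<in> D k f"
  proof (rule mem_D_if_pairwise_diverging[where q = q, OF \<open>k \<ge> 2\<close>])
    show "x \<in> (\<Pi>\<^sub>E i\<in>{..<k}. UNIV)"
      by (simp add: x_def)
    show "filterlim (\<lambda>n. dist ((f ^^ q n) (x i)) ((f ^^ q n) (x j))) at_top sequentially"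
      if "i < k" "j < k" "i \<noteq> j" for i j
      by (rule diverge[OF x_S[OF that(1)] x_S[OF that(2)] x_inj[OF that]])
  qed
  with \<open>x \<in> T\<close> show "D k f \<inter> T \<noteq> {}"
    by blast
qed

section \<open>A Cantor scheme from dense \<open>D\<^sub>k\<close>\<close>

lemma D_dense_separates_open_sets:
  assumes dense: "D_dense f k"
    and "k \<ge> 2"
    and W: "\<And>i. i < k \<Longrightarrow> open (W i)" "\<And>i. i < k \<Longrightarrow> W i \<noteq> {}"
  shows "\<exists>n x. (\<forall>i<k. x i \<in> W i) \<and>
           (\<forall>i<k. \<forall>j<k. i \<noteq> j \<longrightarrow> M < dist ((f ^^ n) (x i)) ((f ^^ n) (x j)))"
proof -
  have "openin (product_topology (\<lambda>_. euclidean) {..<k}) (\<Pi>\<^sub>E i\<in>{..<k}. W i)"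
    by (simp add: openin_PiE W)
  moreover have "(\<Pi>\<^sub>E i\<in>{..<k}. W i) \<noteq> {}"
    using W(2) by (simp add: PiE_eq_empty_iff)
  ultimately have "D k f \<inter> (\<Pi>\<^sub>E i\<in>{..<k}. W i) \<noteq> {}"
    using dense[unfolded D_dense_def dense_intersects_open, rule_format] by blast
  then obtain x where x: "x \<in> D k f" "x \<in> (\<Pi>\<^sub>E i\<in>{..<k}. W i)"
    by blast
  have "\<exists>\<^sub>F n in sequentially. M < pairwise_min_dist f k x n"
    using x(1) by (simp add: mem_D_iff)
  then obtain n where "M < pairwise_min_dist f k x n"
    using frequently_ex by blast
  with x(2) show ?thesis
    unfolding less_pairwise_min_dist_iff[OF \<open>k \<ge> 2\<close>] by blast
qed

lemma D_dense_separates_finite_family: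
  assumes dense: "\<forall>k\<ge>2. D_dense f k"
    and "finite J"
    and W: "\<And>j. j \<in> J \<Longrightarrow> open (W j)" "\<And>j. j \<in> J \<Longrightarrow> W j \<noteq> {}"
  shows "\<exists>n x. (\<forall>j\<in>J. x j \<in> W j) \<and>
           (\<forall>i\<in>J. \<forall>j\<in>J. i \<noteq> j \<longrightarrow> M < dist ((f ^^ n) (x i)) ((f ^^ n) (x j)))"
proof -
  txt \<open>The family is padded with \<open>UNIV\<close> to \<open>k + 2 \<ge> 2\<close> members.\<close>
  obtain g and k :: nat where g: "g ` J = {i. i < k}" "inj_on g J"
    using finite_imp_inj_to_nat_seg[OF \<open>finite J\<close>] by blast
  have g_less: "g j < k" if "j \<in> J" for j
    using g(1) that by blast
  have inv_in: "the_inv_into J g i \<in> J" if "i < k" for i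
    using the_inv_into_into[OF g(2), of i J] g(1) that by blast
  define W' where "W' i = (if i < k then W (the_inv_into J g i) else UNIV)" for i
  have W'_g: "W' (g j) = W j" if "j \<in> J" for j
    using g_less[OF that] the_inv_into_f_f[OF g(2) that] by (simp add: W'_def)
  have "open (W' i)" "W' i \<noteq> {}" for i
    using W[OF inv_in] by (simp_all add: W'_def)
  with dense obtain n x where x: "\<forall>i<k + 2. x i \<in> W' i"
    "\<forall>i<k + 2. \<forall>j<k + 2. i \<noteq> j \<longrightarrow> M < dist ((f ^^ n) (x i)) ((f ^^ n) (x j))"
    using D_dense_separates_open_sets[of f "k + 2" W' M] by auto
  have "\<forall>j\<in>J. x (g j) \<in> W j"
    using x(1) g_less W'_g by fastforce
  moreover have "\<forall>i\<in>J. \<forall>j\<in>J. i \<noteq> j \<longrightarrow> M < dist ((f ^^ n) (x (g i))) ((f ^^ n) (x (g j)))"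
  proof (intro ballI impI)
    fix i j assume "i \<in> J" "j \<in> J" "i \<noteq> j"
    then have "g i \<noteq> g j"
      using inj_on_contraD[OF g(2)] by blast
    then show "M < dist ((f ^^ n) (x (g i))) ((f ^^ n) (x (g j)))"
      using x(2) g_less[OF \<open>i \<in> J\<close>] g_less[OF \<open>j \<in> J\<close>] by simp
  qed
  ultimately show ?thesis
    by (intro exI[of _ n] exI[of _ "x \<circ> g"]) simp
qed

lemma continuous_on_funpow:
  fixes f :: "'a::topological_space \<Rightarrow> 'a"
  assumes "continuous_on UNIV f"
  shows "continuous_on UNIV (f ^^ n)"
proof (induction n)
  case (Suc n)
  then show ?case
    using continuous_on_compose[OF Suc continuous_on_subset[OF assms]] by simp
qed (simp add: id_def)

lemma small_cball_with_small_image: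
  fixes g :: "'a::metric_space \<Rightarrow> 'b::metric_space"
  assumes "continuous_on UNIV g" "open W" "x \<in> W" "0 < \<epsilon>" "0 < \<delta>"
  shows "\<exists>\<rho>>0. \<rho> \<le> \<epsilon> \<and> cball x \<rho> \<subseteq> W \<and> (\<forall>y\<in>cball x \<rho>. dist (g y) (g x) < \<delta>)"
proof -
  obtain e where e: "0 < e" "ball x e \<subseteq> W"
    using assms(2,3) open_contains_ball by blast
  obtain d where d: "0 < d" "\<And>y. dist y x < d \<Longrightarrow> dist (g y) (g x) < \<delta>"
    using assms(1,5) unfolding continuous_on_iff by (metis UNIV_I)
  define \<rho> where "\<rho> = min \<epsilon> (min e d / 2)"
  have "cball x \<rho> \<subseteq> ball x e"
    using e(1) by (auto simp: \<rho>_def)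
  moreover have "dist (g y) (g x) < \<delta>" if "y \<in> cball x \<rho>" for y
  proof (rule d(2))
    show "dist y x < d"
      using that d(1) by (simp add: \<rho>_def dist_commute)
  qed
  moreover have "0 < \<rho>" "\<rho> \<le> \<epsilon>"
    using assms(4) e(1) d(1) by (simp_all add: \<rho>_def)
  ultimately show ?thesis
    using e(2) by blast
qed

lemma separated_cballs_exist:
  fixes g :: "'a::metric_space \<Rightarrow> 'b::metric_space"
  assumes g: "continuous_on UNIV g" and "0 < \<epsilon>"
    and W: "\<And>p. p \<in> J \<Longrightarrow> open (W p)" "\<And>p. p \<in> J \<Longrightarrow> x p \<in> W p"
    and far: "\<And>p p'. p \<in> J \<Longrightarrow> p' \<in> J \<Longrightarrow> p \<noteq> p' \<Longrightarrow> M + 1 < dist (g (x p)) (g (x p'))"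
  shows "\<exists>\<rho>. \<forall>p\<in>J. 0 < \<rho> p \<and> \<rho> p \<le> \<epsilon> \<and> cball (x p) (\<rho> p) \<subseteq> W p \<and>
           (\<forall>p'\<in>J. p \<noteq> p' \<longrightarrow> (\<forall>y\<in>cball (x p) (\<rho> p). \<forall>y'\<in>cball (x p') (\<rho> p'). M \<le> dist (g y) (g y')))"
proof -
  have "\<forall>p\<in>J. \<exists>\<rho>>0. \<rho> \<le> \<epsilon> \<and> cball (x p) \<rho> \<subseteq> W p \<and> (\<forall>y\<in>cball (x p) \<rho>. dist (g y) (g (x p)) < 1/2)"
  proof
    fix p assume "p \<in> J"
    show "\<exists>\<rho>>0. \<rho> \<le> \<epsilon> \<and> cball (x p) \<rho> \<subseteq> W p \<and> (\<forall>y\<in>cball (x p) \<rho>. dist (g y) (g (x p)) < 1/2)"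
      by (rule small_cball_with_small_image[OF g W(1)[OF \<open>p \<in> J\<close>] W(2)[OF \<open>p \<in> J\<close>] \<open>0 < \<epsilon>\<close>]) simp
  qed
  then obtain \<rho> where \<rho>: "\<forall>p\<in>J. 0 < \<rho> p \<and> \<rho> p \<le> \<epsilon> \<and> cball (x p) (\<rho> p) \<subseteq> W p \<and>
      (\<forall>y\<in>cball (x p) (\<rho> p). dist (g y) (g (x p)) < 1/2)"
    by (elim bchoice[elim_format] exE)
  have "M \<le> dist (g y) (g y')"
    if "p \<in> J" "p' \<in> J" "p \<noteq> p'" "y \<in> cball (x p) (\<rho> p)" "y' \<in> cball (x p') (\<rho> p')" for p p' y y'
  proof -
    have "dist (g (x p)) (g (x p')) \<le> dist (g (x p)) (g y) + dist (g y) (g (x p'))"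
      by (rule dist_triangle)
    moreover have "dist (g y) (g (x p')) \<le> dist (g y) (g y') + dist (g y') (g (x p'))"
      by (rule dist_triangle)
    moreover have "dist (g (x p)) (g y) < 1/2"
      using \<rho> that(1,4) by (auto simp: dist_commute)
    moreover have "dist (g y') (g (x p')) < 1/2"
      using \<rho> that(2,5) by auto
    ultimately show ?thesis
      using far[OF that(1-3)] by simp
  qed
  with \<rho> show ?thesis
    by (intro exI[of _ \<rho>]) simp
qed

text \<open>The node \<open>(m, s)\<close> of level \<open>n\<close> is the vertex with binary address \<open>s\<close> of the \<open>m\<close>-th
  tree, which starts at level \<open>m\<close>; hence \<open>length s = n - m\<close>.\<close>

definition scheme_nodes :: "nat \<Rightarrow> (nat \<times> bool list) set" where
  "scheme_nodes n = {(m, s). m \<le> n \<and> length s = n - m}"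

lemma finite_scheme_nodes: "finite (scheme_nodes n)"
proof (rule finite_subset)
  show "scheme_nodes n \<subseteq> {..n} \<times> {s. set s \<subseteq> UNIV \<and> length s \<le> n}"
    by (auto simp: scheme_nodes_def)
qed (intro finite_cartesian_product finite_lists_length_le; simp)

definition scheme_level ::
    "('a::metric_space \<Rightarrow> 'a) \<Rightarrow> (nat \<Rightarrow> 'a set) \<Rightarrow> nat \<Rightarrow>
     (nat \<times> bool list \<Rightarrow> 'a) \<Rightarrow> (nat \<times> bool list \<Rightarrow> real) \<Rightarrow> nat \<Rightarrow> bool" where
  "scheme_level f U n c r q \<longleftrightarrow>
     (\<forall>p\<in>scheme_nodes n. 0 < r p \<and> r p \<le> 1 / Suc n) \<and>
     (\<forall>p\<in>scheme_nodes n. \<forall>p'\<in>scheme_nodes n. p \<noteq> p' \<longrightarrow>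
        (\<forall>x\<in>cball (c p) (r p). \<forall>y\<in>cball (c p') (r p'). n \<le> dist ((f ^^ q) x) ((f ^^ q) y))) \<and>
     cball (c (n, [])) (r (n, [])) \<subseteq> U n"

definition scheme_refines ::
    "nat \<Rightarrow> (nat \<times> bool list \<Rightarrow> 'a::metric_space) \<Rightarrow> (nat \<times> bool list \<Rightarrow> real) \<Rightarrow>
     (nat \<times> bool list \<Rightarrow> 'a) \<Rightarrow> (nat \<times> bool list \<Rightarrow> real) \<Rightarrow> bool" where
  "scheme_refines n c r c' r' \<longleftrightarrow>
     (\<forall>(m, s)\<in>scheme_nodes n. \<forall>b. cball (c' (m, s @ [b])) (r' (m, s @ [b])) \<subseteq> ball (c (m, s)) (r (m, s)))"

lemma scheme_level_0_exists:
  assumes "open (U 0)" "U 0 \<noteq> {}"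
  shows "\<exists>c r q. scheme_level f U 0 c r q"
proof -
  obtain x where "x \<in> U 0"
    using assms(2) by blast
  then obtain \<rho> where "0 < \<rho>" "\<rho> \<le> 1" "cball x \<rho> \<subseteq> U 0"
    using small_cball_with_small_image[OF continuous_on_id assms(1), of x 1 1] by auto
  then have "scheme_level f U 0 (\<lambda>_. x) (\<lambda>_. \<rho>) 0"
    by (simp add: scheme_level_def)
  then show ?thesis by blast
qed

definition scheme_target ::
    "(nat \<Rightarrow> 'a set) \<Rightarrow> (nat \<times> bool list \<Rightarrow> 'a::metric_space) \<Rightarrow> (nat \<times> bool list \<Rightarrow> real) \<Rightarrow>
     nat \<Rightarrow> nat \<times> bool list \<Rightarrow> 'a set" where
  "scheme_target U c r n p = (if fst p = Suc n then U (Suc n)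
     else ball (c (fst p, butlast (snd p))) (r (fst p, butlast (snd p))))"

lemma scheme_target_open_nonempty:
  assumes "open (U (Suc n))" "U (Suc n) \<noteq> {}" "\<forall>p\<in>scheme_nodes n. 0 < r p"
    and "p \<in> scheme_nodes (Suc n)"
  shows "open (scheme_target U c r n p)" "scheme_target U c r n p \<noteq> {}"
proof (atomize (full), cases "fst p = Suc n")
  case False
  with assms(4) have "(fst p, butlast (snd p)) \<in> scheme_nodes n"
    by (auto simp: scheme_nodes_def)
  with assms(3) have "0 < r (fst p, butlast (snd p))"
    by blast
  with False show "open (scheme_target U c r n p) \<and> scheme_target U c r n p \<noteq> {}"
    by (simp add: scheme_target_def)
qed (simp add: scheme_target_def assms(1,2))

lemma scheme_level_Suc_exists:
  fixes f :: "'a::metric_space \<Rightarrow> 'a"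
  assumes cont: "continuous_on UNIV f"
    and dense: "\<forall>k\<ge>2. D_dense f k"
    and U: "open (U (Suc n))" "U (Suc n) \<noteq> {}"
    and r_pos: "\<forall>p\<in>scheme_nodes n. 0 < r p"
  shows "\<exists>c' r' q'. scheme_level f U (Suc n) c' r' q' \<and> scheme_refines n c r c' r'"
proof -
  let ?W = "scheme_target U c r n"
  note W = scheme_target_open_nonempty[where U = U and n = n and c = c, OF U r_pos]
  have "\<exists>q x. (\<forall>p\<in>scheme_nodes (Suc n). x p \<in> ?W p) \<and>
      (\<forall>p\<in>scheme_nodes (Suc n). \<forall>p'\<in>scheme_nodes (Suc n). p \<noteq> p' \<longrightarrow>
           real (Suc n) + 1 < dist ((f ^^ q) (x p)) ((f ^^ q) (x p')))"
    by (rule D_dense_separates_finite_family[OF dense finite_scheme_nodes W])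
  then obtain q x where x: "\<forall>p\<in>scheme_nodes (Suc n). x p \<in> ?W p"
    and far: "\<forall>p\<in>scheme_nodes (Suc n). \<forall>p'\<in>scheme_nodes (Suc n). p \<noteq> p' \<longrightarrow>
           real (Suc n) + 1 < dist ((f ^^ q) (x p)) ((f ^^ q) (x p'))"
    by (elim exE conjE)
  have "\<exists>\<rho>. \<forall>p\<in>scheme_nodes (Suc n). 0 < \<rho> p \<and> \<rho> p \<le> 1 / Suc (Suc n) \<and> cball (x p) (\<rho> p) \<subseteq> ?W p \<and>
      (\<forall>p'\<in>scheme_nodes (Suc n). p \<noteq> p' \<longrightarrow>
         (\<forall>y\<in>cball (x p) (\<rho> p). \<forall>y'\<in>cball (x p') (\<rho> p'). Suc n \<le> dist ((f ^^ q) y) ((f ^^ q) y')))"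
    by (rule separated_cballs_exist[OF continuous_on_funpow[OF cont] _ W(1)])
      (use x far in simp_all)
  then obtain \<rho> where \<rho>: "\<forall>p\<in>scheme_nodes (Suc n). 0 < \<rho> p \<and> \<rho> p \<le> 1 / Suc (Suc n) \<and>
      cball (x p) (\<rho> p) \<subseteq> ?W p \<and> (\<forall>p'\<in>scheme_nodes (Suc n). p \<noteq> p' \<longrightarrow>
         (\<forall>y\<in>cball (x p) (\<rho> p). \<forall>y'\<in>cball (x p') (\<rho> p'). Suc n \<le> dist ((f ^^ q) y) ((f ^^ q) y')))"
    by (elim exE)
  have "(Suc n, []) \<in> scheme_nodes (Suc n)"
    by (simp add: scheme_nodes_def)
  from \<rho>[rule_format, OF this] have "scheme_level f U (Suc n) x \<rho> q"
    using \<rho> unfolding scheme_level_def by (auto simp: scheme_target_def)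
  moreover have "cball (x (m, s @ [b])) (\<rho> (m, s @ [b])) \<subseteq> ball (c (m, s)) (r (m, s))"
    if "(m, s) \<in> scheme_nodes n" for m s b
  proof -
    have "(m, s @ [b]) \<in> scheme_nodes (Suc n)" "m \<noteq> Suc n"
      using that by (auto simp: scheme_nodes_def)
    from \<rho>[rule_format, OF this(1)] this(2) show ?thesis
      by (simp add: scheme_target_def)
  qed
  then have "scheme_refines n c r x \<rho>"
    unfolding scheme_refines_def by blast
  ultimately show ?thesis
    by blast
qed

locale cantor_scheme =
  fixes f :: "'a::complete_space \<Rightarrow> 'a" and U :: "nat \<Rightarrow> 'a set"
    and c :: "nat \<Rightarrow> nat \<times> bool list \<Rightarrow> 'a" and r :: "nat \<Rightarrow> nat \<times> bool list \<Rightarrow> real"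
    and q :: "nat \<Rightarrow> nat"
  assumes level: "\<And>n. scheme_level f U n (c n) (r n) (q n)"
    and refines: "\<And>n. scheme_refines n (c n) (r n) (c (Suc n)) (r (Suc n))"

lemma cantor_scheme_exists:
  fixes f :: "'a::complete_space \<Rightarrow> 'a"
  assumes cont: "continuous_on UNIV f"
    and dense: "\<forall>k\<ge>2. D_dense f k"
    and U: "\<And>m. open (U m)" "\<And>m. U m \<noteq> {}"
  shows "\<exists>c r q. cantor_scheme f U c r q"
proof -
  have "\<exists>t. \<forall>n. scheme_level f U n (fst (t n)) (fst (snd (t n))) (snd (snd (t n))) \<and>
      scheme_refines n (fst (t n)) (fst (snd (t n))) (fst (t (Suc n))) (fst (snd (t (Suc n))))"
  proof (rule dependent_nat_choice)
    show "\<exists>t. scheme_level f U 0 (fst t) (fst (snd t)) (snd (snd t))"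
      using scheme_level_0_exists[OF U] by simp
  next
    fix t n assume "scheme_level f U n (fst t) (fst (snd t)) (snd (snd t))"
    then have "\<forall>p\<in>scheme_nodes n. 0 < fst (snd t) p"
      by (simp add: scheme_level_def)
    then show "\<exists>t'. scheme_level f U (Suc n) (fst t') (fst (snd t')) (snd (snd t')) \<and>
        scheme_refines n (fst t) (fst (snd t)) (fst t') (fst (snd t'))"
      using scheme_level_Suc_exists[OF cont dense U] by simp
  qed
  then obtain t where "\<And>n. scheme_level f U n (fst (t n)) (fst (snd (t n))) (snd (snd (t n)))"
    "\<And>n. scheme_refines n (fst (t n)) (fst (snd (t n))) (fst (t (Suc n))) (fst (snd (t (Suc n))))"
    by blast
  then have "cantor_scheme f U (\<lambda>n. fst (t n)) (\<lambda>n. fst (snd (t n))) (\<lambda>n. snd (snd (t n)))"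
    by unfold_locales
  then show ?thesis by blast
qed

section \<open>The limit set of a Cantor scheme\<close>

context cantor_scheme
begin

lemma radius_pos: "p \<in> scheme_nodes n \<Longrightarrow> 0 < r n p"
  and radius_le: "p \<in> scheme_nodes n \<Longrightarrow> r n p \<le> 1 / Suc n"
  and separated: "p \<in> scheme_nodes n \<Longrightarrow> p' \<in> scheme_nodes n \<Longrightarrow> p \<noteq> p' \<Longrightarrow>
    x \<in> cball (c n p) (r n p) \<Longrightarrow> y \<in> cball (c n p') (r n p') \<Longrightarrow>
    n \<le> dist ((f ^^ q n) x) ((f ^^ q n) y)"
  and root: "cball (c n (n, [])) (r n (n, [])) \<subseteq> U n"
  using level[of n] unfolding scheme_level_def by blast+

lemma child: "(m, s) \<in> scheme_nodes n \<Longrightarrow>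
    cball (c (Suc n) (m, s @ [b])) (r (Suc n) (m, s @ [b])) \<subseteq> ball (c n (m, s)) (r n (m, s))"
  using refines[of n] unfolding scheme_refines_def by blast

definition prefix_ball :: "nat \<Rightarrow> (nat \<Rightarrow> bool) \<Rightarrow> nat \<Rightarrow> 'a set" where
  "prefix_ball m b k = cball (c (m + k) (m, map b [0..<k])) (r (m + k) (m, map b [0..<k]))"

lemma prefix_in_scheme_nodes: "(m, map b [0..<k]) \<in> scheme_nodes (m + k)"
  by (simp add: scheme_nodes_def)

lemma prefix_ball_Suc_subset: "prefix_ball m b (Suc k) \<subseteq> prefix_ball m b k"
proof -
  have "prefix_ball m b (Suc k) \<subseteq> ball (c (m + k) (m, map b [0..<k])) (r (m + k) (m, map b [0..<k]))"
    using child[OF prefix_in_scheme_nodes[of m b k], of "b k"] by (simp add: prefix_ball_def)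
  then show ?thesis
    using ball_subset_cball by (auto simp: prefix_ball_def)
qed

lemma prefix_ball_antimono: "k \<le> k' \<Longrightarrow> prefix_ball m b k' \<subseteq> prefix_ball m b k"
  by (rule lift_Suc_antimono_le[of "prefix_ball m b"]) (use prefix_ball_Suc_subset in auto)

lemma prefix_ball_0_subset: "prefix_ball m b 0 \<subseteq> U m"
  using root[of m] by (simp add: prefix_ball_def)

lemma dist_le_in_prefix_ball:
  assumes "x \<in> prefix_ball m b k" "y \<in> prefix_ball m b k"
  shows "dist x y \<le> 2 / Suc k"
proof -
  let ?p = "(m, map b [0..<k])"
  have "dist x y \<le> dist x (c (m + k) ?p) + dist (c (m + k) ?p) y"
    by (rule dist_triangle)
  also have "\<dots> \<le> 2 * r (m + k) ?p"
    using assms by (simp add: prefix_ball_def dist_commute)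
  also have "\<dots> \<le> 2 / Suc (m + k)"
    using radius_le[OF prefix_in_scheme_nodes[of m b k]] by simp
  also have "\<dots> \<le> 2 / Suc k"
    by (simp add: frac_le)
  finally show ?thesis .
qed

lemma small_prefix_ball: "0 < \<epsilon> \<Longrightarrow> \<exists>k. \<forall>x\<in>prefix_ball m b k. \<forall>y\<in>prefix_ball m b k. dist x y < \<epsilon>"
proof -
  assume "0 < \<epsilon>"
  then obtain k :: nat where "2 / \<epsilon> < k"
    using reals_Archimedean2 by blast
  then have "2 / Suc k < \<epsilon>"
    using \<open>0 < \<epsilon>\<close> by (simp add: field_simps)
  then have "dist x y < \<epsilon>" if "x \<in> prefix_ball m b k" "y \<in> prefix_ball m b k" for x y
    using dist_le_in_prefix_ball[OF that] by linarith
  then show ?thesis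
    by blast
qed

definition cantor_point :: "nat \<Rightarrow> (nat \<Rightarrow> bool) \<Rightarrow> 'a" where
  "cantor_point m b = (SOME a. \<forall>k. a \<in> prefix_ball m b k)"

lemma cantor_point_in_prefix_ball: "cantor_point m b \<in> prefix_ball m b k"
proof -
  obtain a where "\<And>k. a \<in> prefix_ball m b k"
  proof (rule decreasing_closed_nest[of "prefix_ball m b"])
    show "closed (prefix_ball m b k)" for k
      by (simp add: prefix_ball_def)
    show "prefix_ball m b k \<noteq> {}" for k
      using radius_pos[OF prefix_in_scheme_nodes[of m b k]] by (simp add: prefix_ball_def)
    show "prefix_ball m b k' \<subseteq> prefix_ball m b k" if "k \<le> k'" for k k'
      using that by (rule prefix_ball_antimono)
    show "\<exists>k. \<forall>x\<in>prefix_ball m b k. \<forall>y\<in>prefix_ball m b k. dist x y < \<epsilon>" if "0 < \<epsilon>" for \<epsilon>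
      using that by (rule small_prefix_ball)
  qed (rule that)
  then show ?thesis
    using someI_ex[of "\<lambda>a. \<forall>k. a \<in> prefix_ball m b k"] unfolding cantor_point_def by blast
qed

lemma eventually_separated:
  assumes "(m, b) \<noteq> (m', b')"
  shows "\<forall>\<^sub>F n in sequentially. n \<le> dist ((f ^^ q n) (cantor_point m b)) ((f ^^ q n) (cantor_point m' b'))"
proof -
  obtain N where N: "\<And>n. N \<le> n \<Longrightarrow> (m, map b [0..<n - m]) \<noteq> (m', map b' [0..<n - m'])"
  proof (cases "m = m'")
    case True
    with assms obtain j where j: "b j \<noteq> b' j" by auto
    show thesis
    proof (rule that[of "Suc (m + j)"])
      fix n assume "Suc (m + j) \<le> n"
      then have "map b [0..<n - m] ! j \<noteq> map b' [0..<n - m'] ! j"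
        using True j by simp
      then show "(m, map b [0..<n - m]) \<noteq> (m', map b' [0..<n - m'])"
        by (metis prod.inject)
    qed
  qed (use that in auto)
  show ?thesis
    unfolding eventually_sequentially
  proof (intro exI allI impI)
    fix n assume n: "max N (max m m') \<le> n"
    have "cantor_point m b \<in> cball (c n (m, map b [0..<n - m])) (r n (m, map b [0..<n - m]))"
      using cantor_point_in_prefix_ball[of m b "n - m"] n by (simp add: prefix_ball_def)
    moreover have "cantor_point m' b' \<in> cball (c n (m', map b' [0..<n - m'])) (r n (m', map b' [0..<n - m']))"
      using cantor_point_in_prefix_ball[of m' b' "n - m'"] n by (simp add: prefix_ball_def)
    moreover have "(m, map b [0..<n - m]) \<in> scheme_nodes n" "(m', map b' [0..<n - m']) \<in> scheme_nodes n"
      using n by (simp_all add: scheme_nodes_def)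
    ultimately show "n \<le> dist ((f ^^ q n) (cantor_point m b)) ((f ^^ q n) (cantor_point m' b'))"
      using separated N n by simp
  qed
qed

lemma cantor_point_eqD:
  assumes "cantor_point m b = cantor_point m' b'"
  shows "m = m' \<and> b = b'"
proof (rule ccontr)
  assume "\<not> (m = m' \<and> b = b')"
  with eventually_separated[of m b m' b'] assms have "\<forall>\<^sub>F n in sequentially. real n \<le> 0"
    by simp
  then obtain N where "\<And>n. N \<le> n \<Longrightarrow> real n \<le> 0"
    unfolding eventually_sequentially by blast
  from this[of "Suc N"] show False
    by simp
qed

lemma inj_cantor_point: "inj (cantor_point m)"
proof (rule injI)
  fix b b' assume "cantor_point m b = cantor_point m b'"
  then show "b = b'"
    using cantor_point_eqD by blast
qed

lemma continuous_on_cantor_point: "continuous_on UNIV (cantor_point m)"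
  unfolding continuous_on_def
proof (intro ballI tendstoI)
  fix b :: "nat \<Rightarrow> bool" and \<epsilon> :: real
  assume "0 < \<epsilon>"
  then obtain k where k: "\<forall>x\<in>prefix_ball m b k. \<forall>y\<in>prefix_ball m b k. dist x y < \<epsilon>"
    using small_prefix_ball by blast
  have "open {b'. \<forall>i\<in>{..<k}. b' i \<in> {b i}}"
    by (rule product_topology_basis'[where x = "\<lambda>i. i", simplified]) (auto simp: open_discrete)
  moreover have "dist (cantor_point m b') (cantor_point m b) < \<epsilon>"
    if "b' \<in> {b'. \<forall>i\<in>{..<k}. b' i \<in> {b i}}" for b'
  proof -
    have "map b' [0..<k] = map b [0..<k]"
      using that by (simp add: atLeast0LessThan)
    then have "prefix_ball m b' k = prefix_ball m b k"
      by (simp only: prefix_ball_def)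
    then show ?thesis
      using k cantor_point_in_prefix_ball[of m b' k] cantor_point_in_prefix_ball[of m b k] by simp
  qed
  ultimately show "\<forall>\<^sub>F b' in at b within UNIV. dist (cantor_point m b') (cantor_point m b) < \<epsilon>"
    unfolding eventually_at_topological by auto
qed

definition limit_set :: "'a set" where
  "limit_set = (\<Union>m. range (cantor_point m))"

lemma sigma_Cantor_limit_set: "sigma_Cantor limit_set"
  unfolding sigma_Cantor_def limit_set_def
proof (intro exI[of _ "range (\<lambda>m. range (cantor_point m))"] conjI ballI)
  fix C assume "C \<in> range (\<lambda>m. range (cantor_point m))"
  then show "C homeomorphic cantor_ternary_set"
    using range_homeomorphic_cantor_ternary_set[OF continuous_on_cantor_point inj_cantor_point] by blast
qed simp_all

lemma limit_set_diverges:
  assumes "x \<in> limit_set" "y \<in> limit_set" "x \<noteq> y"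
  shows "filterlim (\<lambda>n. dist ((f ^^ q n) x) ((f ^^ q n) y)) at_top sequentially"
proof -
  obtain m b m' b' where x: "x = cantor_point m b" and y: "y = cantor_point m' b'"
    using assms(1,2) unfolding limit_set_def by blast
  with assms(3) have "(m, b) \<noteq> (m', b')"
    by blast
  from eventually_separated[OF this]
  have "\<forall>\<^sub>F n in sequentially. real n \<le> dist ((f ^^ q n) x) ((f ^^ q n) y)"
    by (simp add: x y)
  then show ?thesis
    by (rule filterlim_at_top_mono[OF filterlim_real_sequentially])
qed

lemma closure_limit_set:
  assumes "\<And>V. open V \<Longrightarrow> V \<noteq> {} \<Longrightarrow> \<exists>m. U m \<subseteq> V"
  shows "closure limit_set = UNIV"
proof -
  have "limit_set \<inter> V \<noteq> {}" if V: "open V" "V \<noteq> {}" for V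
  proof -
    obtain m where m: "U m \<subseteq> V"
      using assms[OF V] by blast
    have "cantor_point m (\<lambda>_. True) \<in> U m"
      using cantor_point_in_prefix_ball[of m "\<lambda>_. True" 0] prefix_ball_0_subset[of m "\<lambda>_. True"]
      by blast
    moreover have "cantor_point m (\<lambda>_. True) \<in> limit_set"
      unfolding limit_set_def by blast
    ultimately show ?thesis
      using m by blast
  qed
  then have "euclidean closure_of limit_set = topspace euclidean"
    unfolding dense_intersects_open by auto
  then show ?thesis
    by simp
qed

end

lemma countable_base_sequence:
  obtains U :: "nat \<Rightarrow> 'a::second_countable_topology set"
  where "\<And>m. open (U m)" "\<And>m. U m \<noteq> {}" "\<And>V. open V \<Longrightarrow> V \<noteq> {} \<Longrightarrow> \<exists>m. U m \<subseteq> V"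
proof -
  obtain \<B> :: "'a set set" where \<B>: "countable \<B>" "\<And>C. C \<in> \<B> \<Longrightarrow> open C"
    "\<And>S. open S \<Longrightarrow> \<exists>U. U \<subseteq> \<B> \<and> S = \<Union>U"
    using univ_second_countable by blast
  define \<B>' where "\<B>' = \<B> - {{}}"
  have refines: "\<exists>C\<in>\<B>'. C \<subseteq> V" if "open V" "V \<noteq> {}" for V
    using \<B>(3)[OF that(1)] that(2) unfolding \<B>'_def by blast
  then have "\<B>' \<noteq> {}"
    by blast
  moreover have "countable \<B>'"
    using \<B>(1) by (simp add: \<B>'_def)
  ultimately have range: "range (from_nat_into \<B>') = \<B>'"
    by (rule range_from_nat_into)
  show thesis
  proof (rule that[of "from_nat_into \<B>'"])
    show "open (from_nat_into \<B>' m)" "from_nat_into \<B>' m \<noteq> {}" for m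
      using \<B>(2) range unfolding \<B>'_def by blast+
    show "\<exists>m. from_nat_into \<B>' m \<subseteq> V" if "open V" "V \<noteq> {}" for V
      using refines[OF that] range by (metis rangeE)
  qed
qed

theorem corollary2p5:
  fixes f :: "'a::{polish_space, perfect_space} \<Rightarrow> 'a"
  assumes "continuous_on UNIV f"
  shows "(\<forall>k\<ge>2. (product_topology (\<lambda>_. euclidean) {..<k}) closure_of (D k f)
                 = topspace (product_topology (\<lambda>_. euclidean) {..<k}))
     \<longleftrightarrow> (\<exists>q :: nat \<Rightarrow> nat. \<exists>S. sigma_Cantor S \<and> closure S = UNIV \<and>
            (\<forall>x\<in>S. \<forall>y\<in>S. x \<noteq> y \<longrightarrow>
               filterlim (\<lambda>n. dist ((f ^^ q n) x) ((f ^^ q n) y)) at_top sequentially))"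
  unfolding D_dense_def[symmetric]
proof
  assume dense: "\<forall>k\<ge>2. D_dense f k"
  obtain U :: "nat \<Rightarrow> 'a set" where U: "\<And>m. open (U m)" "\<And>m. U m \<noteq> {}"
    and base: "\<And>V. open V \<Longrightarrow> V \<noteq> {} \<Longrightarrow> \<exists>m. U m \<subseteq> V"
    by (rule countable_base_sequence) auto
  obtain c r q where "cantor_scheme f U c r q"
    using cantor_scheme_exists[where U = U, OF assms dense U] by blast
  then interpret cantor_scheme f U c r q .
  show "\<exists>q S. sigma_Cantor S \<and> closure S = UNIV \<and>
      (\<forall>x\<in>S. \<forall>y\<in>S. x \<noteq> y \<longrightarrow> filterlim (\<lambda>n. dist ((f ^^ q n) x) ((f ^^ q n) y)) at_top sequentially)"
    using sigma_Cantor_limit_set closure_limit_set[OF base] limit_set_diverges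
    by (intro exI[of _ q] exI[of _ limit_set]) blast
next
  assume "\<exists>q S. sigma_Cantor S \<and> closure S = UNIV \<and>
      (\<forall>x\<in>S. \<forall>y\<in>S. x \<noteq> y \<longrightarrow> filterlim (\<lambda>n. dist ((f ^^ q n) x) ((f ^^ q n) y)) at_top sequentially)"
  then obtain q S where "closure S = UNIV"
    "\<forall>x\<in>S. \<forall>y\<in>S. x \<noteq> y \<longrightarrow> filterlim (\<lambda>n. dist ((f ^^ q n) x) ((f ^^ q n) y)) at_top sequentially"
    by (elim exE conjE)
  then show "\<forall>k\<ge>2. D_dense f k"
    by (intro allI impI D_dense_if_dense_diverging_set[where q = q]) auto
qed

end
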